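(* Assume the standing assumptions with $0\le\mu<L$. Let $k\in\mathbb N$, $R_k\in\mathbb R$, $v_k\in\mathbb R^n$, $x_k\in\operatorname{dom} g$, $\alpha_k\in(0,1)$, $\gamma_k>0$, and let $\hat\gamma_{k+1},y_k,g_k,v_{k+1},x_{k+1}$ be produced by the stepwise weak accelerated proximal gradient step. Define $\epsilon_k:=F(x_k)-F(T_L y_k)-\langle g_k,x_k-y_k\rangle-\frac1{2L}\|g_k\|^2$ and $$R_{k+1}:=\frac12\Big(L^{-1}-\frac{\alpha_k^2}{\hat\gamma_{k+1}}\Big)\|g_k\|^2+(1-\alpha_k)\Big(\epsilon_k+R_k+\frac{\mu\alpha_k\gamma_k}{2\hat\gamma_{k+1}}\|v_k-y_k\|^2\Big).$$ Then for every $x^*\in\mathbb R^n$, $$F(x_{k+1})-F(x^* )+R_{k+1}+\frac{\hat\gamma_{k+1}}2\|v_{k+1}-x^*\|^2\le(1-\alpha_k)\Big(F(x_k)-F(x^* )+R_k+\frac{\gamma_k}{2}\|v_k-x^*\|^2\Big).$$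
   Context: Standing assumptions: $f:\mathbb R^n\to\mathbb R$ is differentiable with $L$-Lipschitz gradient and $\mu$-strongly convex ($\mu\ge0$); $g:\mathbb R^n\to\mathbb R\cup\{+\infty\}$ proper, closed, convex; $F=f+g$. $T_L(y):=\operatorname{argmin}_x\{g(x)+\langle\nabla f(y),x\rangle+\frac L2\|x-y\|^2\}$, $\mathcal G_L(y):=L(y-T_L(y))$. Stepwise weak accelerated proximal gradient step: given $v_k,x_k$, $\alpha_k\in(0,1)$, $\gamma_k>0$, set $\hat\gamma_{k+1}:=(1-\alpha_k)\gamma_k+\mu\alpha_k$, $y_k:=(\gamma_k+\alpha_k\mu)^{-1}(\alpha_k\gamma_k v_k+\hat\gamma_{k+1}x_k)$, $g_k:=\mathcal G_L(y_k)$, $v_{k+1}:=\hat\gamma_{k+1}^{-1}(\gamma_k(1-\alpha_k)v_k-\alpha_k g_k+\mu\alpha_k y_k)$, $x_{k+1}:=T_L(y_k)$. *)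

theory Defs
  imports "HOL-Analysis.Analysis"
begin

definition proper_fun :: "('a \<Rightarrow> ereal) \<Rightarrow> bool" where
  "proper_fun g \<longleftrightarrow> (\<forall>x. g x \<noteq> -\<infinity>) \<and> (\<exists>x. g x \<noteq> \<infinity>)"

definition convex_fun :: "('a::real_vector \<Rightarrow> ereal) \<Rightarrow> bool" where
  "convex_fun g \<longleftrightarrow> (\<forall>x y t. 0 < t \<and> t < 1 \<longrightarrow>
      g (t *\<^sub>R x + (1 - t) *\<^sub>R y) \<le> ereal t * g x + ereal (1 - t) * g y)"

definition closed_fun :: "('a::topological_space \<Rightarrow> ereal) \<Rightarrow> bool" where
  "closed_fun g \<longleftrightarrow> closed {(x, t::real). g x \<le> ereal t}"

definition dom_fun :: "('a \<Rightarrow> ereal) \<Rightarrow> 'a set" where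
  "dom_fun g = {x. g x < \<infinity>}"

definition strongly_convex :: "real \<Rightarrow> ('a::real_normed_vector \<Rightarrow> real) \<Rightarrow> bool" where
  "strongly_convex \<mu> f \<longleftrightarrow> (\<forall>x y t. 0 \<le> t \<and> t \<le> 1 \<longrightarrow>
      f (t *\<^sub>R x + (1 - t) *\<^sub>R y) \<le> t * f x + (1 - t) * f y - \<mu> / 2 * t * (1 - t) * (norm (x - y))\<^sup>2)"

text \<open>T_L(y) = argmin_x { g x + <grad f y, x> + L/2 |x - y|^2 }, with df the gradient of f.\<close>
definition prox_obj :: "real \<Rightarrow> ('a::real_inner \<Rightarrow> 'a) \<Rightarrow> ('a \<Rightarrow> ereal) \<Rightarrow> 'a \<Rightarrow> 'a \<Rightarrow> ereal" where
  "prox_obj L df g y x = g x + ereal (inner (df y) x + L / 2 * (norm (x - y))\<^sup>2)"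

definition T_L :: "real \<Rightarrow> ('a::real_inner \<Rightarrow> 'a) \<Rightarrow> ('a \<Rightarrow> ereal) \<Rightarrow> 'a \<Rightarrow> 'a" where
  "T_L L df g y = (THE x. \<forall>z. prox_obj L df g y x \<le> prox_obj L df g y z)"

definition G_L :: "real \<Rightarrow> ('a::real_inner \<Rightarrow> 'a) \<Rightarrow> ('a \<Rightarrow> ereal) \<Rightarrow> 'a \<Rightarrow> 'a" where
  "G_L L df g y = L *\<^sub>R (y - T_L L df g y)"

end

theory Submission
  imports Defs
begin

text \<open>
  The proximal gradient step z = T_L y satisfies, for every x,
    F x >= F z + <G, x - y> + |G|^2/(2L) + mu/2 |x - y|^2,   where G = L (y - z):
  the smooth part is bounded above at z by the descent lemma and below at x by strong convexity,
  and g is bounded below at x by the optimality condition of the L-strongly convex proximal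
  subproblem. Using this inequality at x = x* with weight alpha, and adding the defect epsilon of
  the same inequality at x = x_k with weight 1 - alpha, the one-step estimate reduces to an exact
  quadratic identity for |v_(k+1) - x*|^2 coming from the definitions of y_k and v_(k+1).
\<close>

section \<open>Smooth strongly convex functions\<close>

lemma has_real_derivative_along_line:
  fixes f :: "'a::real_inner \<Rightarrow> real"
  assumes "GDERIV f (y + t *\<^sub>R u) :> D"
  shows "((\<lambda>s. f (y + s *\<^sub>R u)) has_real_derivative inner u D) (at t)"
proof -
  have "((\<lambda>s. y + s *\<^sub>R u) has_derivative (\<lambda>h. h *\<^sub>R u)) (at t)"
    by (auto intro!: derivative_eq_intros)
  moreover have "(f has_derivative (\<lambda>h. inner h D)) (at (y + t *\<^sub>R u))"
    using assms by (simp add: gderiv_def)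
  ultimately have "((\<lambda>s. f (y + s *\<^sub>R u)) has_derivative (\<lambda>h. inner (h *\<^sub>R u) D)) (at t)"
    using has_derivative_compose by fastforce
  moreover have "(\<lambda>h. inner (h *\<^sub>R u) D) = (*) (inner u D)" by (auto simp: fun_eq_iff)
  ultimately show ?thesis by (simp add: has_field_derivative_def)
qed

lemma strongly_convex_gradient_lower_bound:
  fixes f :: "'a::real_inner \<Rightarrow> real"
  assumes grad: "\<forall>x. GDERIV f x :> df x" and sc: "strongly_convex \<mu> f"
  shows "f y + inner (df y) (x - y) + \<mu>/2 * (norm (x - y))\<^sup>2 \<le> f x"
proof -
  define u where "u = x - y"
  have "((\<lambda>s. f (y + s *\<^sub>R u)) has_real_derivative inner u (df y)) (at_right 0)"
    using has_real_derivative_along_line[of f y 0 u "df y"] grad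
    by (simp add: has_field_derivative_at_within)
  then have slope: "((\<lambda>t. (f (y + t *\<^sub>R u) - f y) / t) \<longlongrightarrow> inner u (df y)) (at_right 0)"
    unfolding has_field_derivative_iff by simp
  have bound: "((\<lambda>t. f x - f y - \<mu>/2 * (1 - t) * (norm u)\<^sup>2)
      \<longlongrightarrow> f x - f y - \<mu>/2 * (1 - 0) * (norm u)\<^sup>2) (at_right (0::real))"
    by (intro tendsto_intros)
  have "\<forall>\<^sub>F t in at_right 0. (f (y + t *\<^sub>R u) - f y) / t \<le> f x - f y - \<mu>/2 * (1 - t) * (norm u)\<^sup>2"
  proof (rule eventually_at_rightI[of 0 1])
    fix t :: real assume t: "t \<in> {0<..<1}"
    have "f (t *\<^sub>R x + (1 - t) *\<^sub>R y) \<le> t * f x + (1 - t) * f y - \<mu>/2 * t * (1 - t) * (norm u)\<^sup>2"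
      using sc t unfolding strongly_convex_def u_def by auto
    moreover have "t *\<^sub>R x + (1 - t) *\<^sub>R y = y + t *\<^sub>R u" by (simp add: u_def algebra_simps)
    ultimately have "f (y + t *\<^sub>R u) - f y \<le> t * (f x - f y - \<mu>/2 * (1 - t) * (norm u)\<^sup>2)"
      by (simp add: algebra_simps)
    with t show "(f (y + t *\<^sub>R u) - f y) / t \<le> f x - f y - \<mu>/2 * (1 - t) * (norm u)\<^sup>2"
      by (simp add: divide_le_eq mult.commute)
  qed simp
  from tendsto_le[OF trivial_limit_at_right_real bound slope this]
  show ?thesis by (simp add: u_def inner_commute)
qed

lemma lipschitz_gradient_upper_bound:
  fixes f :: "'a::real_inner \<Rightarrow> real"
  assumes grad: "\<forall>x. GDERIV f x :> df x"
    and lip: "\<forall>x y. norm (df x - df y) \<le> L * norm (x - y)"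
  shows "f z \<le> f y + inner (df y) (z - y) + L/2 * (norm (z - y))\<^sup>2"
proof -
  define u where "u = z - y"
  define \<psi> where "\<psi> s = f (y + s *\<^sub>R u) - s * inner (df y) u - L/2 * (s * s) * (norm u)\<^sup>2" for s
  have "\<psi> 1 \<le> \<psi> 0"
  proof (rule DERIV_nonpos_imp_nonincreasing[of 0 1 \<psi>])
    fix s :: real assume s: "0 \<le> s" "s \<le> 1"
    have D: "(\<psi> has_real_derivative
        inner u (df (y + s *\<^sub>R u)) - inner (df y) u - L/2 * (2 * s) * (norm u)\<^sup>2) (at s)"
      unfolding \<psi>_def using grad by (auto intro!: derivative_eq_intros has_real_derivative_along_line)
    have "inner u (df (y + s *\<^sub>R u)) - inner (df y) u = inner u (df (y + s *\<^sub>R u) - df y)"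
      by (simp add: inner_diff_right inner_commute)
    also have "\<dots> \<le> norm u * norm (df (y + s *\<^sub>R u) - df y)" by (rule norm_cauchy_schwarz)
    also have "\<dots> \<le> norm u * (L * norm (s *\<^sub>R u))"
      using lip[rule_format, of "y + s *\<^sub>R u" y] by (simp add: mult_left_mono)
    also have "\<dots> = L/2 * (2 * s) * (norm u)\<^sup>2" using s by (simp add: power2_eq_square)
    finally show "\<exists>d. DERIV \<psi> s :> d \<and> d \<le> 0" using D by (intro exI[of _ "_ - _ - _"]) auto
  qed simp
  then show ?thesis by (simp add: \<psi>_def u_def inner_commute)
qed

section \<open>The proximal map\<close>

lemma compact_attains_min_of_closed_sublevels:
  fixes h :: "'a::topological_space \<Rightarrow> ereal"
  assumes K: "compact K" "K \<noteq> {}" and closed: "\<And>c. closed {x. h x \<le> c}"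
  shows "\<exists>z\<in>K. \<forall>x\<in>K. h z \<le> h x"
proof (rule ccontr)
  assume "\<not> ?thesis"
  then have cover: "K \<subseteq> (\<Union>c\<in>K. {w. h c < h w})" by (auto simp: not_le)
  have "open {w. h c < h w}" for c
  proof -
    have "{w. h c < h w} = - {w. h w \<le> h c}" by (auto simp: not_le)
    then show ?thesis using closed[of "h c"] by (simp add: open_Compl)
  qed
  then obtain T where T: "T \<subseteq> K" "finite T" "K \<subseteq> (\<Union>c\<in>T. {w. h c < h w})"
    using compactE_image[OF K(1) _ cover] by metis
  with K(2) have "Min (h ` T) \<in> h ` T" by (intro Min_in) auto
  then obtain z where z: "z \<in> T" "h z = Min (h ` T)" by auto
  with T obtain c where "c \<in> T" "h c < h z" by blast
  moreover have "h z \<le> h c" using z T \<open>c \<in> T\<close> by (simp add: Min_le)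
  ultimately show False by simp
qed

lemma power2_norm_convex_combination:
  fixes a b :: "'a::real_inner"
  shows "(norm (t *\<^sub>R a + (1 - t) *\<^sub>R b))\<^sup>2
    = t * (norm a)\<^sup>2 + (1 - t) * (norm b)\<^sup>2 - t * (1 - t) * (norm (a - b))\<^sup>2"
  unfolding power2_norm_eq_inner
  by (simp add: inner_simps inner_commute algebra_simps power2_eq_square)

text \<open>The real value of prox_obj, meaningful only where g is finite (real_of_ereal maps \<infinity> to 0).\<close>

definition prox_val :: "real \<Rightarrow> ('a::real_inner \<Rightarrow> 'a) \<Rightarrow> ('a \<Rightarrow> ereal) \<Rightarrow> 'a \<Rightarrow> 'a \<Rightarrow> real" where
  "prox_val L df g y x = real_of_ereal (g x) + (inner (df y) x + L/2 * (norm (x - y))\<^sup>2)"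

lemma proper_fun_neq_MInf: "proper_fun g \<Longrightarrow> g x \<noteq> -\<infinity>"
  by (simp add: proper_fun_def)

lemma proper_fun_ereal_real:
  "proper_fun g \<Longrightarrow> g x \<noteq> \<infinity> \<Longrightarrow> ereal (real_of_ereal (g x)) = g x"
  by (cases "g x") (auto simp: proper_fun_def)

lemma prox_obj_eq_prox_val:
  "proper_fun g \<Longrightarrow> g x \<noteq> \<infinity> \<Longrightarrow> prox_obj L df g y x = ereal (prox_val L df g y x)"
  by (cases "g x") (auto simp: prox_obj_def prox_val_def proper_fun_def)

lemma prox_obj_PInf: "g x = \<infinity> \<Longrightarrow> prox_obj L df g y x = \<infinity>"
  by (simp add: prox_obj_def)

lemma prox_obj_le_imp_finite:
  assumes "proper_fun g" "prox_obj L df g y z \<le> prox_obj L df g y x" "g x \<noteq> \<infinity>"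
  shows "g z \<noteq> \<infinity>"
  using assms prox_obj_PInf prox_obj_eq_prox_val by force

lemma closed_prox_obj_sublevel:
  fixes g :: "'a::real_inner \<Rightarrow> ereal"
  assumes proper: "proper_fun g" and closed: "closed_fun g"
  shows "closed {x. prox_obj L df g y x \<le> c}"
proof (cases c)
  case (real r)
  define q where "q x = inner (df y) x + L/2 * (norm (x - y))\<^sup>2" for x
  have "{x. prox_obj L df g y x \<le> c} = (\<lambda>x. (x, r - q x)) -` {(x, t::real). g x \<le> ereal t}"
    using proper_fun_neq_MInf[OF proper] real
    by (intro set_eqI) (case_tac "g x"; auto simp: prox_obj_def q_def)
  moreover have "closed {(x, t::real). g x \<le> ereal t}" using closed by (simp add: closed_fun_def)
  moreover have "continuous (at x) (\<lambda>x. (x, r - q x))" for x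
    unfolding q_def by (intro continuous_intros)
  ultimately show ?thesis by (metis (no_types, lifting) continuous_closed_vimage)
next
  case MInf
  then have "{x. prox_obj L df g y x \<le> c} = {}"
    using proper_fun_neq_MInf[OF proper] by (auto simp: prox_obj_def)
  then show ?thesis by simp
qed simp

lemma prox_val_strongly_convex:
  fixes g :: "'a::real_inner \<Rightarrow> ereal"
  assumes proper: "proper_fun g" and convex: "convex_fun g"
    and fin: "g x1 \<noteq> \<infinity>" "g x2 \<noteq> \<infinity>" and t: "0 < t" "t < 1"
  shows "g (t *\<^sub>R x1 + (1 - t) *\<^sub>R x2) \<noteq> \<infinity>"
    and "prox_val L df g y (t *\<^sub>R x1 + (1 - t) *\<^sub>R x2)
      \<le> t * prox_val L df g y x1 + (1 - t) * prox_val L df g y x2 - L/2 * t * (1 - t) * (norm (x1 - x2))\<^sup>2"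
      (is "?lhs \<le> ?rhs")
proof -
  define w where "w = t *\<^sub>R x1 + (1 - t) *\<^sub>R x2"
  obtain a1 a2 where a: "g x1 = ereal a1" "g x2 = ereal a2"
    using fin proper_fun_neq_MInf[OF proper] by (metis ereal_cases)
  have "g w \<le> ereal t * g x1 + ereal (1 - t) * g x2"
    using convex t unfolding convex_fun_def w_def by auto
  then obtain aw where aw: "g w = ereal aw" "aw \<le> t * a1 + (1 - t) * a2"
    using proper_fun_neq_MInf[OF proper, of w] a by (cases "g w") auto
  then show "g (t *\<^sub>R x1 + (1 - t) *\<^sub>R x2) \<noteq> \<infinity>" by (simp add: w_def)
  have "w - y = t *\<^sub>R (x1 - y) + (1 - t) *\<^sub>R (x2 - y)" by (simp add: w_def algebra_simps)
  then have nw: "(norm (w - y))\<^sup>2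
      = t * (norm (x1 - y))\<^sup>2 + (1 - t) * (norm (x2 - y))\<^sup>2 - t * (1 - t) * (norm (x1 - x2))\<^sup>2"
    using power2_norm_convex_combination[of t "x1 - y" "x2 - y"] by simp
  have iw: "inner (df y) w = t * inner (df y) x1 + (1 - t) * inner (df y) x2"
    by (simp add: w_def inner_simps)
  have "?rhs = t * a1 + (1 - t) * a2 + inner (df y) w + L/2 * (norm (w - y))\<^sup>2"
    unfolding prox_val_def a nw iw by (simp add: field_simps)
  moreover have "prox_val L df g y w = aw + inner (df y) w + L/2 * (norm (w - y))\<^sup>2"
    by (simp add: prox_val_def aw)
  ultimately show "?lhs \<le> ?rhs" using aw by (simp add: w_def[symmetric])
qed

lemma prox_val_coercive:
  fixes g :: "'a::real_inner \<Rightarrow> ereal"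
  assumes proper: "proper_fun g" and convex: "convex_fun g" and L: "L > 0"
    and x0: "g x0 \<noteq> \<infinity>"
    and lower: "\<And>w. w \<in> cball x0 1 \<Longrightarrow> g w \<noteq> \<infinity> \<Longrightarrow> m \<le> prox_val L df g y w"
    and x: "g x \<noteq> \<infinity>" "2 + 2 * (prox_val L df g y x0 - m) / L \<le> norm (x - x0)"
  shows "prox_val L df g y x0 < prox_val L df g y x"
proof -
  let ?h = "prox_val L df g y"
  define d where "d = norm (x - x0)"
  have "m \<le> ?h x0" using lower[OF _ x0] by simp
  then have d2: "2 \<le> d" using x(2) L unfolding d_def by (smt (verit) divide_nonneg_pos)
  define t where "t = 1 / d"
  have t: "0 < t" "t < 1" using d2 by (auto simp: t_def)
  define w where "w = t *\<^sub>R x + (1 - t) *\<^sub>R x0"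
  have "norm (w - x0) = 1"
  proof -
    have "w - x0 = t *\<^sub>R (x - x0)" by (simp add: w_def algebra_simps)
    moreover have "x \<noteq> x0" using d2 by (auto simp: d_def)
    ultimately show ?thesis using d2 by (simp add: t_def d_def)
  qed
  then have "m \<le> ?h w"
    using lower prox_val_strongly_convex(1)[OF proper convex x(1) x0 t]
    by (simp add: w_def dist_norm norm_minus_commute)
  also have "\<dots> \<le> t * ?h x + (1 - t) * ?h x0 - L/2 * t * (1 - t) * d\<^sup>2"
    using prox_val_strongly_convex(2)[OF proper convex x(1) x0 t] by (simp add: w_def d_def)
  finally have "d * m \<le> d * (t * ?h x + (1 - t) * ?h x0 - L/2 * t * (1 - t) * d\<^sup>2)"
    using d2 by (simp add: mult_left_mono)
  also have "\<dots> = ?h x + (d - 1) * ?h x0 - L/2 * (d - 1) * d"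
    using d2 by (simp add: t_def field_simps power2_eq_square)
  finally have "?h x0 + d * (m - ?h x0 + L/2 * (d - 1)) \<le> ?h x" by (simp add: algebra_simps)
  moreover have "0 < m - ?h x0 + L/2 * (d - 1)"
    using x(2) L by (simp add: d_def field_simps)
  ultimately show ?thesis using d2 by (smt (verit) mult_pos_pos)
qed

lemma prox_obj_has_minimizer:
  fixes g :: "'a::euclidean_space \<Rightarrow> ereal"
  assumes proper: "proper_fun g" and convex: "convex_fun g" and closed: "closed_fun g" and L: "L > 0"
  obtains z where "g z \<noteq> \<infinity>" "\<forall>w. prox_obj L df g y z \<le> prox_obj L df g y w"
proof -
  txt \<open>A minimum over the unit ball around a point of dom g bounds the objective from below there;
    by coercivity, a minimiser over a large enough ball is then a global one.\<close>
  let ?h = "prox_obj L df g y" and ?hr = "prox_val L df g y"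
  have sublevel: "\<And>c. closed {x. ?h x \<le> c}" using closed_prox_obj_sublevel[OF proper closed] .
  obtain x0 where x0: "g x0 \<noteq> \<infinity>" using proper by (auto simp: proper_fun_def)
  obtain z1 where z1: "z1 \<in> cball x0 1" "\<forall>x\<in>cball x0 1. ?h z1 \<le> ?h x"
    using compact_attains_min_of_closed_sublevels[of "cball x0 1" ?h] sublevel by auto
  have "g z1 \<noteq> \<infinity>" using prox_obj_le_imp_finite[OF proper z1(2)[rule_format, of x0] x0] by simp
  then have lower: "?hr z1 \<le> ?hr w" if "w \<in> cball x0 1" "g w \<noteq> \<infinity>" for w
    using z1 that prox_obj_eq_prox_val[OF proper] by fastforce
  define R where "R = 2 + 2 * (?hr x0 - ?hr z1) / L"
  have "?hr z1 \<le> ?hr x0" using lower[OF _ x0] by simp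
  then have x0R: "x0 \<in> cball x0 R" using L by (simp add: R_def)
  obtain z where z: "z \<in> cball x0 R" "\<forall>x\<in>cball x0 R. ?h z \<le> ?h x"
    using compact_attains_min_of_closed_sublevels[of "cball x0 R" ?h] sublevel x0R by auto
  have gz: "g z \<noteq> \<infinity>" using prox_obj_le_imp_finite[OF proper _ x0] z x0R by blast
  have "?h z \<le> ?h w" for w
  proof (cases "w \<in> cball x0 R \<or> g w = \<infinity>")
    case True
    then show ?thesis using z by (auto simp: prox_obj_PInf)
  next
    case False
    then have "?hr x0 < ?hr w"
      using prox_val_coercive[OF proper convex L x0 lower, of w]
      by (simp add: R_def dist_norm norm_minus_commute)
    moreover have "?h z \<le> ereal (?hr x0)"
      using z x0R prox_obj_eq_prox_val[OF proper x0] by metis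
    moreover have "?h w = ereal (?hr w)" using False prox_obj_eq_prox_val[OF proper] by simp
    ultimately show ?thesis by (metis ereal_less_eq(3) less_imp_le order_trans)
  qed
  with gz that show ?thesis by blast
qed

lemma prox_obj_minimizer_unique:
  fixes g :: "'a::real_inner \<Rightarrow> ereal"
  assumes proper: "proper_fun g" and convex: "convex_fun g" and L: "L > 0"
    and fin: "g z1 \<noteq> \<infinity>" "g z2 \<noteq> \<infinity>"
    and min: "\<forall>w. prox_obj L df g y z1 \<le> prox_obj L df g y w"
      "\<forall>w. prox_obj L df g y z2 \<le> prox_obj L df g y w"
  shows "z1 = z2"
proof -
  let ?hr = "prox_val L df g y"
  define w where "w = (1/2) *\<^sub>R z1 + (1 - 1/2) *\<^sub>R z2"
  have gw: "g w \<noteq> \<infinity>"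
    using prox_val_strongly_convex(1)[OF proper convex fin, where t="1/2"] by (simp add: w_def)
  have "?hr z1 = ?hr z2" "?hr z2 \<le> ?hr w"
    using min prox_obj_eq_prox_val[OF proper] fin gw by (metis antisym ereal_less_eq(3))+
  moreover have "?hr w \<le> 1/2 * ?hr z1 + (1 - 1/2) * ?hr z2 - L/2 * (1/2) * (1 - 1/2) * (norm (z1 - z2))\<^sup>2"
    using prox_val_strongly_convex(2)[OF proper convex fin, of "1/2"] by (simp add: w_def)
  ultimately have "L * (norm (z1 - z2))\<^sup>2 \<le> 0" by simp
  then show ?thesis using L by (simp add: mult_le_0_iff)
qed

lemma T_L_minimizes_prox_obj:
  fixes g :: "'a::euclidean_space \<Rightarrow> ereal"
  assumes proper: "proper_fun g" and convex: "convex_fun g" and closed: "closed_fun g" and L: "L > 0"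
  shows "g (T_L L df g y) \<noteq> \<infinity>"
    and "\<forall>w. prox_obj L df g y (T_L L df g y) \<le> prox_obj L df g y w"
proof -
  obtain z where z: "g z \<noteq> \<infinity>" "\<forall>w. prox_obj L df g y z \<le> prox_obj L df g y w"
    using prox_obj_has_minimizer[OF assms] .
  have "T_L L df g y = z" unfolding T_L_def
  proof (rule the_equality)
    fix x assume x: "\<forall>w. prox_obj L df g y x \<le> prox_obj L df g y w"
    then have "g x \<noteq> \<infinity>" using prox_obj_le_imp_finite[OF proper _ z(1)] by blast
    then show "x = z" using prox_obj_minimizer_unique[OF proper convex L _ z(1) x z(2)] by simp
  qed (use z in simp)
  with z show "g (T_L L df g y) \<noteq> \<infinity>" "\<forall>w. prox_obj L df g y (T_L L df g y) \<le> prox_obj L df g y w"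
    by simp_all
qed

lemma prox_obj_minimizer_optimality:
  fixes g :: "'a::real_inner \<Rightarrow> ereal"
  assumes proper: "proper_fun g" and convex: "convex_fun g"
    and min: "\<forall>w. prox_obj L df g y z \<le> prox_obj L df g y w"
    and gz: "g z \<noteq> \<infinity>" and gx: "g x \<noteq> \<infinity>"
  shows "real_of_ereal (g z) + inner (L *\<^sub>R (y - z) - df y) (x - z) \<le> real_of_ereal (g x)"
proof -
  let ?hr = "prox_val L df g y"
  have "t * (L/2 * (norm (x - z))\<^sup>2) \<le> ?hr x - ?hr z" if t: "0 < t" "t < 1" for t
  proof -
    define w where "w = (1 - t) *\<^sub>R x + (1 - (1 - t)) *\<^sub>R z"
    have t': "0 < 1 - t" "1 - t < 1" using t by auto
    have "?hr z \<le> ?hr w"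
      using min prox_obj_eq_prox_val[OF proper] gz prox_val_strongly_convex(1)[OF proper convex gx gz t']
      by (metis ereal_less_eq(3) w_def)
    also have "\<dots> \<le> (1 - t) * ?hr x + t * ?hr z - L/2 * (1 - t) * t * (norm (x - z))\<^sup>2"
      using prox_val_strongly_convex(2)[OF proper convex gx gz t'] by (simp add: w_def)
    finally have "(1 - t) * (t * (L/2 * (norm (x - z))\<^sup>2)) \<le> (1 - t) * (?hr x - ?hr z)"
      by (simp add: algebra_simps)
    then show ?thesis using t by simp
  qed
  then have "L/2 * (norm (x - z))\<^sup>2 \<le> ?hr x - ?hr z" by (rule field_le_mult_one_interval)
  moreover have "(norm (x - y))\<^sup>2 = (norm (x - z))\<^sup>2 + 2 * inner (x - z) (z - y) + (norm (z - y))\<^sup>2"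
    using power2_norm_eq_inner[of "x - y"] power2_norm_eq_inner[of "x - z"] power2_norm_eq_inner[of "z - y"]
    by (simp add: inner_simps inner_commute)
  ultimately show ?thesis
    by (simp add: prox_val_def inner_simps inner_commute algebra_simps)
qed

section \<open>The proximal gradient inequality\<close>

lemma proximal_gradient_inequality:
  fixes f :: "'a::euclidean_space \<Rightarrow> real" and g :: "'a \<Rightarrow> ereal" and x y :: 'a
  assumes grad: "\<forall>x. GDERIV f x :> df x"
    and lip: "\<forall>x y. norm (df x - df y) \<le> L * norm (x - y)"
    and sc: "strongly_convex \<mu> f"
    and proper: "proper_fun g" and convex: "convex_fun g" and closed: "closed_fun g" and L: "L > 0"
    and gx: "g x \<noteq> \<infinity>"
  defines "z \<equiv> T_L L df g y" and "G \<equiv> G_L L df g y"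
  shows "g z \<noteq> \<infinity>"
    and "f z + real_of_ereal (g z) + inner G (x - y) + 1 / (2 * L) * (norm G)\<^sup>2 + \<mu>/2 * (norm (x - y))\<^sup>2
      \<le> f x + real_of_ereal (g x)"
proof -
  show gz: "g z \<noteq> \<infinity>" unfolding z_def by (rule T_L_minimizes_prox_obj[OF proper convex closed L])
  have G: "G = L *\<^sub>R (y - z)" by (simp add: G_def G_L_def z_def)
  have "real_of_ereal (g z) + inner (G - df y) (x - z) \<le> real_of_ereal (g x)"
    using prox_obj_minimizer_optimality[OF proper convex _ gz gx]
      T_L_minimizes_prox_obj(2)[OF proper convex closed L] by (simp add: G z_def)
  moreover have "f y + inner (df y) (x - y) + \<mu>/2 * (norm (x - y))\<^sup>2 \<le> f x"
    by (rule strongly_convex_gradient_lower_bound[OF grad sc])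
  moreover have "f z \<le> f y + inner (df y) (z - y) + L/2 * (norm (z - y))\<^sup>2"
    by (rule lipschitz_gradient_upper_bound[OF grad lip])
  moreover have "inner (G - df y) (x - z)
      = inner G (x - y) + L * (norm (z - y))\<^sup>2 - inner (df y) (x - y) + inner (df y) (z - y)"
    unfolding G power2_norm_eq_inner by (simp add: inner_simps algebra_simps)
  moreover have "1 / (2 * L) * (norm G)\<^sup>2 = L/2 * (norm (z - y))\<^sup>2"
  proof -
    have "norm G = L * norm (z - y)" using L by (simp add: G norm_minus_commute)
    then show ?thesis using L by (simp add: power2_eq_square)
  qed
  ultimately show "f z + real_of_ereal (g z) + inner G (x - y) + 1 / (2 * L) * (norm G)\<^sup>2
      + \<mu>/2 * (norm (x - y))\<^sup>2 \<le> f x + real_of_ereal (g x)"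
    by linarith
qed

section \<open>The one-step estimate\<close>

lemma weak_apg_identity:
  fixes v x G xs y v1 :: "'a::real_inner" and a \<gamma> \<mu> gh :: real
  assumes gh: "gh = (1 - a) * \<gamma> + \<mu> * a" "gh \<noteq> 0" and s: "\<gamma> + a * \<mu> \<noteq> 0"
    and y: "y = inverse (\<gamma> + a * \<mu>) *\<^sub>R ((a * \<gamma>) *\<^sub>R v + gh *\<^sub>R x)"
    and v1: "v1 = inverse gh *\<^sub>R ((\<gamma> * (1 - a)) *\<^sub>R v - a *\<^sub>R G + (\<mu> * a) *\<^sub>R y)"
  shows "gh/2 * (norm (v1 - xs))\<^sup>2
    = (1 - a) * \<gamma>/2 * (norm (v - xs))\<^sup>2 + a * \<mu>/2 * (norm (xs - y))\<^sup>2
      + a * inner G (xs - y) + (1 - a) * inner G (x - y)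
      + a\<^sup>2 / (2 * gh) * (norm G)\<^sup>2 - (1 - a) * \<mu> * a * \<gamma> / (2 * gh) * (norm (v - y))\<^sup>2"
proof -
  have "(\<gamma> + a * \<mu>) *\<^sub>R y = (a * \<gamma>) *\<^sub>R v + gh *\<^sub>R x" using s by (simp add: y)
  then have "gh *\<^sub>R (x - y) = (\<gamma> + a * \<mu> - gh) *\<^sub>R y - (a * \<gamma>) *\<^sub>R v"
    by (simp add: algebra_simps)
  also have "\<gamma> + a * \<mu> - gh = a * \<gamma>" by (simp add: gh(1) algebra_simps)
  txt \<open>x - y is parallel to y - v, which eliminates x from the identity.\<close>
  finally have ip: "gh * inner G (x - y) = a * \<gamma> * inner G (y - v)"
    by (metis inner_diff_right inner_scaleR_right scaleR_diff_right)
  have "gh *\<^sub>R (v1 - xs) = (\<gamma> * (1 - a)) *\<^sub>R v - a *\<^sub>R G + (\<mu> * a) *\<^sub>R y - gh *\<^sub>R xs"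
    using gh(2) by (simp add: v1 scaleR_diff_right)
  then have "gh\<^sup>2 * (norm (v1 - xs))\<^sup>2
      = (norm ((\<gamma> * (1 - a)) *\<^sub>R v - a *\<^sub>R G + (\<mu> * a) *\<^sub>R y - gh *\<^sub>R xs))\<^sup>2"
    by (metis norm_scaleR power2_abs power_mult_distrib)
  also have "\<dots> = gh * (1 - a) * \<gamma> * (norm (v - xs))\<^sup>2 + gh * a * \<mu> * (norm (xs - y))\<^sup>2
        + 2 * gh * a * inner G (xs - y) + 2 * (1 - a) * (a * \<gamma> * inner G (y - v))
        + a\<^sup>2 * (norm G)\<^sup>2 - (1 - a) * \<mu> * a * \<gamma> * (norm (v - y))\<^sup>2"
    unfolding gh(1) power2_norm_eq_inner
    by (simp add: inner_simps inner_commute algebra_simps power2_eq_square)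
  finally have expanded: "gh\<^sup>2 * (norm (v1 - xs))\<^sup>2
      = (gh * (1 - a) * \<gamma> * (norm (v - xs))\<^sup>2 + gh * a * \<mu> * (norm (xs - y))\<^sup>2
        + 2 * gh * a * inner G (xs - y) + 2 * (1 - a) * (gh * inner G (x - y))
        + a\<^sup>2 * (norm G)\<^sup>2 - (1 - a) * \<mu> * a * \<gamma> * (norm (v - y))\<^sup>2)"
    unfolding ip .
  have "gh/2 * (norm (v1 - xs))\<^sup>2 = gh\<^sup>2 * (norm (v1 - xs))\<^sup>2 / (2 * gh)"
    using gh(2) by (simp add: power2_eq_square)
  also have "\<dots> = (gh * (1 - a) * \<gamma> * (norm (v - xs))\<^sup>2 + gh * a * \<mu> * (norm (xs - y))\<^sup>2
        + 2 * gh * a * inner G (xs - y) + 2 * (1 - a) * (gh * inner G (x - y))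
        + a\<^sup>2 * (norm G)\<^sup>2 - (1 - a) * \<mu> * a * \<gamma> * (norm (v - y))\<^sup>2) / (2 * gh)"
    by (simp only: expanded)
  also have "\<dots> = (1 - a) * \<gamma>/2 * (norm (v - xs))\<^sup>2 + a * \<mu>/2 * (norm (xs - y))\<^sup>2
      + a * inner G (xs - y) + (1 - a) * inner G (x - y)
      + a\<^sup>2 / (2 * gh) * (norm G)\<^sup>2 - (1 - a) * \<mu> * a * \<gamma> / (2 * gh) * (norm (v - y))\<^sup>2"
    using gh(2) by (simp add: field_simps)
  finally show ?thesis .
qed

lemma weak_apg_step_estimate:
  fixes v x G xs y v1 :: "'a::real_inner" and a \<gamma> \<mu> gh L :: real
  assumes gh: "gh = (1 - a) * \<gamma> + \<mu> * a" "gh \<noteq> 0" and s: "\<gamma> + a * \<mu> \<noteq> 0"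
    and L: "L \<noteq> 0" and a: "0 \<le> a"
    and y: "y = inverse (\<gamma> + a * \<mu>) *\<^sub>R ((a * \<gamma>) *\<^sub>R v + gh *\<^sub>R x)"
    and v1: "v1 = inverse gh *\<^sub>R ((\<gamma> * (1 - a)) *\<^sub>R v - a *\<^sub>R G + (\<mu> * a) *\<^sub>R y)"
    and key: "Fz + inner G (xs - y) + 1 / (2 * L) * (norm G)\<^sup>2 + \<mu>/2 * (norm (xs - y))\<^sup>2 \<le> Fs"
  shows "Fz - Fs + (1/2 * (inverse L - a\<^sup>2 / gh) * (norm G)\<^sup>2
      + (1 - a) * ((Fx - Fz - (inner G (x - y) + 1 / (2 * L) * (norm G)\<^sup>2))
        + R + \<mu> * a * \<gamma> / (2 * gh) * (norm (v - y))\<^sup>2))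
      + gh/2 * (norm (v1 - xs))\<^sup>2
    \<le> (1 - a) * (Fx - Fs + R + \<gamma>/2 * (norm (v - xs))\<^sup>2)" (is "?lhs \<le> ?rhs")
proof -
  have "?lhs - ?rhs
      = a * (Fz + inner G (xs - y) + 1 / (2 * L) * (norm G)\<^sup>2 + \<mu>/2 * (norm (xs - y))\<^sup>2 - Fs)"
    unfolding weak_apg_identity[OF gh s y v1]
    using gh(2) L by (simp add: field_simps inverse_eq_divide)
  moreover have "a * (Fz + inner G (xs - y) + 1 / (2 * L) * (norm G)\<^sup>2 + \<mu>/2 * (norm (xs - y))\<^sup>2 - Fs) \<le> 0"
    using key a by (simp add: mult_nonneg_nonpos)
  ultimately show ?thesis by linarith
qed

theorem mainTheorem4:
  fixes f :: "'a::euclidean_space \<Rightarrow> real" and df :: "'a \<Rightarrow> 'a"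
    and g :: "'a \<Rightarrow> ereal" and L \<mu> :: real
    and k :: nat and R_k \<alpha>_k \<gamma>_k :: real and v_k x_k x_star :: 'a
  defines "F \<equiv> (\<lambda>x. ereal (f x) + g x)"
    and "\<gamma>_hat \<equiv> (1 - \<alpha>_k) * \<gamma>_k + \<mu> * \<alpha>_k"
  defines "y_k \<equiv> inverse (\<gamma>_k + \<alpha>_k * \<mu>) *\<^sub>R ((\<alpha>_k * \<gamma>_k) *\<^sub>R v_k + \<gamma>_hat *\<^sub>R x_k)"
  defines "g_k \<equiv> G_L L df g y_k"
  defines "v_k1 \<equiv> inverse \<gamma>_hat *\<^sub>R ((\<gamma>_k * (1 - \<alpha>_k)) *\<^sub>R v_k - \<alpha>_k *\<^sub>R g_k + (\<mu> * \<alpha>_k) *\<^sub>R y_k)"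
    and "x_k1 \<equiv> T_L L df g y_k"
  defines "\<epsilon>_k \<equiv> F x_k - F (T_L L df g y_k)
               - ereal (inner g_k (x_k - y_k) + 1 / (2 * L) * (norm g_k)\<^sup>2)"
  defines "R_k1 \<equiv> ereal (1 / 2 * (inverse L - \<alpha>_k\<^sup>2 / \<gamma>_hat) * (norm g_k)\<^sup>2)
               + ereal (1 - \<alpha>_k) * (\<epsilon>_k + ereal R_k
                   + ereal (\<mu> * \<alpha>_k * \<gamma>_k / (2 * \<gamma>_hat) * (norm (v_k - y_k))\<^sup>2))"
  assumes grad: "\<forall>x. GDERIV f x :> df x"
    and lip: "\<forall>x y. norm (df x - df y) \<le> L * norm (x - y)"
    and sc: "strongly_convex \<mu> f"
    and mu: "0 \<le> \<mu>" "\<mu> < L"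
    and gprop: "proper_fun g" and gconv: "convex_fun g" and gclosed: "closed_fun g"
    and xk: "x_k \<in> dom_fun g"
    and alpha: "0 < \<alpha>_k" "\<alpha>_k < 1"
    and gamma: "0 < \<gamma>_k"
  shows "F x_k1 - F x_star + R_k1 + ereal (\<gamma>_hat / 2 * (norm (v_k1 - x_star))\<^sup>2)
          \<le> ereal (1 - \<alpha>_k) * (F x_k - F x_star + ereal R_k
               + ereal (\<gamma>_k / 2 * (norm (v_k - x_star))\<^sup>2))"
proof -
  have L: "L > 0" and L': "L \<noteq> 0" using mu by linarith+
  have "\<gamma>_k + \<alpha>_k * \<mu> > 0" "\<gamma>_hat > 0"
    using alpha gamma mu by (simp_all add: \<gamma>_hat_def add_pos_nonneg)
  then have s: "\<gamma>_k + \<alpha>_k * \<mu> \<noteq> 0" and gh: "\<gamma>_hat \<noteq> 0" by simp_all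
  have gx: "g x_k \<noteq> \<infinity>" using xk by (simp add: dom_fun_def)
  let ?val = "\<lambda>x. f x + real_of_ereal (g x)"
  have F_real: "F x = ereal (?val x)" if "g x \<noteq> \<infinity>" for x
    using proper_fun_ereal_real[OF gprop that] by (simp add: F_def flip: plus_ereal.simps)
  note ineq = proximal_gradient_inequality[OF grad lip sc gprop gconv gclosed L, of _ y_k,
      folded g_k_def x_k1_def]
  have F_x_k1: "F x_k1 = ereal (?val x_k1)" using F_real ineq(1)[OF gx] .
  have R_k1: "R_k1 = ereal (1/2 * (inverse L - \<alpha>_k\<^sup>2 / \<gamma>_hat) * (norm g_k)\<^sup>2
      + (1 - \<alpha>_k) * ((?val x_k - ?val x_k1 - (inner g_k (x_k - y_k) + 1 / (2 * L) * (norm g_k)\<^sup>2))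
        + R_k + \<mu> * \<alpha>_k * \<gamma>_k / (2 * \<gamma>_hat) * (norm (v_k - y_k))\<^sup>2))"
    (is "_ = ereal ?R")
    unfolding R_k1_def \<epsilon>_k_def x_k1_def[symmetric] F_x_k1 F_real[OF gx] by simp
  show ?thesis
  proof (cases "g x_star = \<infinity>")
    case True
    then have "F x_star = \<infinity>" by (simp add: F_def)
    then show ?thesis by (simp add: F_x_k1 R_k1)
  next
    case False
    have "?val x_k1 - ?val x_star + ?R + \<gamma>_hat / 2 * (norm (v_k1 - x_star))\<^sup>2
      \<le> (1 - \<alpha>_k) * (?val x_k - ?val x_star + R_k + \<gamma>_k / 2 * (norm (v_k - x_star))\<^sup>2)"
      using ineq(2)[OF False] alpha
      by (intro weak_apg_step_estimate[OF \<gamma>_hat_def[THEN meta_eq_to_obj_eq] gh s L' _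
            y_k_def[THEN meta_eq_to_obj_eq] v_k1_def[THEN meta_eq_to_obj_eq]]) auto
    then show ?thesis by (simp add: F_x_k1 R_k1 F_real[OF gx] F_real[OF False])
  qed
qed

end
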